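(* For every $s\in[0,1]$ there is a constant $C$ such that for all $f\in H^1$ and all $\varepsilon\in(0,1)$ with $\varepsilon^{-1}\in\mathbb{N}$, $$\big\|(1-\partial_x^2)^{-s/2}f^\varepsilon(1-\partial_x^2)^{s/2}\big\|_{L^2\to L^2}\le C\varepsilon^{-s}\|f\|_{H^1},$$ where $f^\varepsilon$ denotes the operator of multiplication by $f^\varepsilon(x)=f(x/\varepsilon)$.
   Context: Functions are $2\pi$-periodic; $L^2=L^2[0,2\pi]$ with inner product $\langle f,g\rangle=\frac1{2\pi}\int_0^{2\pi}f\bar g\,dx$ and norm $\|\cdot\|$; $\|f\|_{H^s}=\|(1-\partial_x^2)^{s/2}f\|$. *)

theory Defs
  imports "HOL-Analysis.Analysis"
begin

definition periodic2pi :: "(real \<Rightarrow> complex) \<Rightarrow> bool" where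
  "periodic2pi u \<longleftrightarrow> (\<forall>x. u (x + 2 * pi) = u x)"

definition fcoeff :: "(real \<Rightarrow> complex) \<Rightarrow> int \<Rightarrow> complex" where
  "fcoeff u k = complex_of_real (1 / (2 * pi)) *
     (LINT x:{0..2*pi}|lebesgue. u x * exp (- (\<i> * of_int k * complex_of_real x)))"

definition in_L2 :: "(real \<Rightarrow> complex) \<Rightarrow> bool" where
  "in_L2 u \<longleftrightarrow> periodic2pi u \<and> u \<in> borel_measurable lebesgue \<and>
     set_integrable lebesgue {0..2*pi} (\<lambda>x. (cmod (u x))\<^sup>2)"

definition L2norm :: "(real \<Rightarrow> complex) \<Rightarrow> real" where
  "L2norm u = sqrt ((1 / (2 * pi)) * (LINT x:{0..2*pi}|lebesgue. (cmod (u x))\<^sup>2))"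

text \<open>Sobolev norm: the L2 norm of (1 - d^2/dx^2)^{s/2} u, computed through the
  Fourier multiplier (1+k^2)^{s/2} and Parseval.\<close>
definition Hs_norm :: "real \<Rightarrow> (real \<Rightarrow> complex) \<Rightarrow> real" where
  "Hs_norm s u = sqrt (\<Sum>\<^sub>\<infinity>k\<in>(UNIV::int set). (1 + (real_of_int k)\<^sup>2) powr s * (cmod (fcoeff u k))\<^sup>2)"

definition Hs_summable :: "real \<Rightarrow> (real \<Rightarrow> complex) \<Rightarrow> bool" where
  "Hs_summable s u \<longleftrightarrow>
     (\<lambda>k::int. (1 + (real_of_int k)\<^sup>2) powr s * (cmod (fcoeff u k))\<^sup>2) summable_on UNIV"

definition in_H1 :: "(real \<Rightarrow> complex) \<Rightarrow> bool" where
  "in_H1 u \<longleftrightarrow> in_L2 u \<and> Hs_summable 1 u"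

definition trig_poly :: "int set \<Rightarrow> (int \<Rightarrow> complex) \<Rightarrow> real \<Rightarrow> complex" where
  "trig_poly K a x = (\<Sum>k\<in>K. a k * exp (\<i> * of_int k * complex_of_real x))"

text \<open>(1 - d^2/dx^2)^{s/2} applied to the trigonometric polynomial trig_poly K a.\<close>
definition bessel_trig :: "real \<Rightarrow> int set \<Rightarrow> (int \<Rightarrow> complex) \<Rightarrow> real \<Rightarrow> complex" where
  "bessel_trig s K a x =
     (\<Sum>k\<in>K. complex_of_real ((1 + (real_of_int k)\<^sup>2) powr (s / 2)) * a k
              * exp (\<i> * of_int k * complex_of_real x))"

definition dilate :: "real \<Rightarrow> (real \<Rightarrow> complex) \<Rightarrow> real \<Rightarrow> complex" where
  "dilate \<epsilon> f x = f (x / \<epsilon>)"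

end

theory Submission
  imports Defs
begin

(*
  Write eps = 1/n and w(k) = 1 + k^2.  Since f(n x) only has frequencies in nZ, the j-th Fourier
  coefficient of the product only involves the k in K with j = k + n m, and it is the sum of
  w(k)^(s/2) a_k fhat(m) over them.  Cauchy-Schwarz with the weights w(m) bounds its square by
  ||f||_{H^1}^2 times the sum of w(k)^s |a_k|^2 / w(m).  Peetre's inequality
  w(k)^s <= 2 w(j)^s + 2 n^(2s) w(m)^s and the interpolation bound u^s v^(1-s) <= u + v turn
  w(j)^(-s) w(k)^s / w(m) into O(n^(2s) (1/w(m) + 1/w(j))).  Summing over j then only uses that
  1/w is summable over Z, together with Parseval for the trigonometric polynomial.
*)

lemma powr_add_le_add_powr:
  fixes a b s :: real
  assumes "0 \<le> a" "0 \<le> b" "0 \<le> s" "s \<le> 1"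
  shows "(a + b) powr s \<le> a powr s + b powr s"
proof (cases "a + b = 0")
  case True
  then show ?thesis using assms by auto
next
  case False
  have part: "c * (a + b) powr (s - 1) \<le> c powr s" if "0 \<le> c" "c \<le> a + b" for c
  proof (cases "c = 0")
    case False
    then have "c * (a + b) powr (s - 1) \<le> c * c powr (s - 1)"
      using that assms by (intro mult_left_mono powr_mono2') auto
    also have "\<dots> = c powr s" using False that by (simp add: powr_diff)
    finally show ?thesis .
  qed simp
  have "(a + b) powr s = (a + b) * (a + b) powr (s - 1)"
    using False assms by (simp add: powr_diff)
  also have "\<dots> = a * (a + b) powr (s - 1) + b * (a + b) powr (s - 1)"
    by (rule distrib_right)
  also have "\<dots> \<le> a powr s + b powr s"
    using assms by (intro add_mono part) auto
  finally show ?thesis .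
qed

lemma powr_mult_powr_one_minus_le_add:
  fixes u v s :: real
  assumes "0 < u" "0 < v" "0 \<le> s" "s \<le> 1"
  shows "u powr s * v powr (1 - s) \<le> u + v"
proof -
  have "u powr s * v powr (1 - s) \<le> max u v powr s * max u v powr (1 - s)"
    using assms by (intro mult_mono powr_mono2) auto
  also have "\<dots> = max u v" using assms by (simp add: powr_add[symmetric])
  finally show ?thesis using assms by linarith
qed

definition weight :: "int \<Rightarrow> real" where
  "weight k = 1 + (real_of_int k)\<^sup>2"

lemma weight_ge_one: "1 \<le> weight k"
  by (simp add: weight_def)

lemma weight_pos [simp]: "0 < weight k" "0 \<le> weight k" "weight k \<noteq> 0"
  using weight_ge_one[of k] by auto

lemma weight_diff_le: "weight (j - c * m) \<le> 2 * weight j + 2 * (real_of_int c)\<^sup>2 * weight m"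
proof -
  define x y z where "x = real_of_int j" and "y = real_of_int c" and "z = real_of_int m"
  have "(x - y * z)\<^sup>2 \<le> 2 * x\<^sup>2 + 2 * (y\<^sup>2 * z\<^sup>2)"
    using sum_squares_ge_zero[of "x + y * z" 0] by (simp add: power2_eq_square algebra_simps)
  moreover have "2 * (1 + x\<^sup>2) + 2 * y\<^sup>2 * (1 + z\<^sup>2) = 2 + 2 * x\<^sup>2 + 2 * y\<^sup>2 + 2 * (y\<^sup>2 * z\<^sup>2)"
    by (simp add: algebra_simps)
  moreover have "0 \<le> y\<^sup>2" by simp
  ultimately have "1 + (x - y * z)\<^sup>2 \<le> 2 * (1 + x\<^sup>2) + 2 * y\<^sup>2 * (1 + z\<^sup>2)"
    by linarith
  then show ?thesis
    unfolding weight_def x_def y_def z_def by simp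
qed

lemma weight_powr_diff_le:
  fixes n :: nat and s :: real
  assumes "0 \<le> s" "s \<le> 1"
  shows "weight (j - int n * m) powr s \<le> 2 * weight j powr s + 2 * real n powr (2 * s) * weight m powr s"
proof -
  have "weight (j - int n * m) powr s \<le> (2 * weight j + 2 * (real n)\<^sup>2 * weight m) powr s"
    using weight_diff_le[of j "int n" m] assms by (intro powr_mono2) auto
  also have "\<dots> \<le> (2 * weight j) powr s + (2 * (real n)\<^sup>2 * weight m) powr s"
    using assms by (intro powr_add_le_add_powr) auto
  also have "\<dots> = 2 powr s * (weight j powr s + real n powr (2 * s) * weight m powr s)"
  proof -
    have "(real n)\<^sup>2 powr s = real n powr (2 * s)"
    proof (cases "n = 0")
      case False
      then have "(real n)\<^sup>2 = real n powr 2" by (simp add: powr_realpow)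
      then show ?thesis by (simp only: powr_powr)
    qed simp
    then show ?thesis by (simp add: powr_mult distrib_left)
  qed
  also have "\<dots> \<le> 2 * (weight j powr s + real n powr (2 * s) * weight m powr s)"
    using powr_mono[of s 1 2] assms by (intro mult_right_mono) auto
  finally show ?thesis by (simp add: distrib_left mult.assoc)
qed

lemma weight_ratio_le:
  fixes n :: nat and s :: real
  assumes "1 \<le> n" "0 \<le> s" "s \<le> 1"
  shows "weight j powr (-s) * weight (j - int n * m) powr s / weight m
     \<le> 2 * real n powr (2 * s) * (2 / weight m + 1 / weight j)"
proof -
  define x y where "x = weight j" and "y = weight m"
  have x: "1 \<le> x" and y: "1 \<le> y" unfolding x_def y_def by (auto intro: weight_ge_one)
  have n_powr: "1 \<le> real n powr (2 * s)"
    using assms by (simp add: ge_one_powr_ge_zero)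
  have "x powr (-s) * y powr s / y = (1 / x) powr s * (1 / y) powr (1 - s)"
    using x y by (simp add: powr_divide powr_minus_divide powr_diff)
  also have "\<dots> \<le> 1 / x + 1 / y"
    using x y assms by (intro powr_mult_powr_one_minus_le_add) auto
  finally have interpolation: "x powr (-s) * y powr s / y \<le> 1 / x + 1 / y" .
  have "x powr (-s) * weight (j - int n * m) powr s / y
      \<le> x powr (-s) * (2 * x powr s + 2 * real n powr (2 * s) * y powr s) / y"
    unfolding x_def y_def
    using weight_powr_diff_le[OF assms(2,3)] by (intro divide_right_mono mult_left_mono) auto
  also have "\<dots> = 2 / y + 2 * real n powr (2 * s) * (x powr (-s) * y powr s / y)"
    using x y by (simp add: field_simps powr_minus)
  also have "\<dots> \<le> 2 / y + 2 * real n powr (2 * s) * (1 / x + 1 / y)"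
    using interpolation by (intro add_left_mono mult_left_mono) auto
  also have "\<dots> \<le> 2 * real n powr (2 * s) * (2 / y + 1 / x)"
    using mult_right_mono[OF n_powr, of "2 / y"] y by (simp add: algebra_simps)
  finally show ?thesis unfolding x_def y_def .
qed

lemma has_sum_sum:
  fixes f :: "'i \<Rightarrow> 'a \<Rightarrow> 'b::topological_comm_monoid_add"
  assumes "finite I" "\<And>i. i \<in> I \<Longrightarrow> (f i has_sum S i) A"
  shows "((\<lambda>x. \<Sum>i\<in>I. f i x) has_sum (\<Sum>i\<in>I. S i)) A"
  using assms by (induction I rule: finite_induct) (auto intro: has_sum_add)

lemma has_sum_dominated:
  fixes g h :: "'a \<Rightarrow> real"
  assumes "(h has_sum S) A" "\<And>x. x \<in> A \<Longrightarrow> 0 \<le> g x" "\<And>x. x \<in> A \<Longrightarrow> g x \<le> h x"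
  shows "g summable_on A" "infsum g A \<le> S"
proof -
  show g: "g summable_on A"
    by (rule summable_on_comparison_test[OF has_sum_imp_summable[OF assms(1)]]) (use assms in auto)
  show "infsum g A \<le> S"
    by (rule has_sum_mono[OF has_sum_infsum[OF g] assms(1) assms(3)])
qed

lemma summable_on_inverse_weight: "(\<lambda>m. 1 / weight m) summable_on UNIV"
proof -
  have "summable (\<lambda>n::nat. 1 / (1 + (real n)\<^sup>2))"
  proof (rule summable_comparison_test'[OF inverse_power_summable[of 2]])
    fix n :: nat assume "1 \<le> n"
    then show "norm (1 / (1 + (real n)\<^sup>2)) \<le> inverse (of_nat n ^ 2)"
      by (simp add: divide_inverse le_imp_inverse_le)
  qed simp
  then have nat: "((\<lambda>m. 1 / weight m) \<circ> int) summable_on UNIV"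
    by (simp add: o_def weight_def summable_on_UNIV_nonneg_real_iff)
  have pos: "(\<lambda>m. 1 / weight m) summable_on range int"
    using nat by (simp add: summable_on_reindex)
  have neg: "(\<lambda>m. 1 / weight m) summable_on range (\<lambda>n. - int n)"
    using nat by (subst summable_on_reindex) (auto simp: o_def inj_on_def weight_def)
  have "x = int (nat x) \<or> x = - int (nat (- x))" for x :: int
    by linarith
  then have "UNIV = range int \<union> range (\<lambda>n. - int n)"
    by blast
  then show ?thesis
    using summable_on_union[OF pos neg] by simp
qed

definition inverse_weight_sum :: real where
  "inverse_weight_sum = (\<Sum>\<^sub>\<infinity>m. 1 / weight m)"

definition progression_inverse_weight :: "nat \<Rightarrow> int \<Rightarrow> int \<Rightarrow> real" where
  "progression_inverse_weight n k j = (if int n dvd (j - k) then 1 / weight ((j - k) div int n) else 0)"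

lemma has_sum_progression_inverse_weight:
  assumes "1 \<le> n"
  shows "(progression_inverse_weight n k has_sum inverse_weight_sum) UNIV"
proof -
  define h where "h m = k + int n * m" for m
  have inj: "inj h" using assms by (auto simp: inj_on_def h_def)
  have "progression_inverse_weight n k \<circ> h = (\<lambda>m. 1 / weight m)"
    using assms by (auto simp: h_def fun_eq_iff progression_inverse_weight_def)
  then have "(progression_inverse_weight n k has_sum inverse_weight_sum) (range h)"
    using summable_on_inverse_weight
    by (simp add: has_sum_reindex[OF inj] inverse_weight_sum_def)
  moreover have "progression_inverse_weight n k j = 0" if "j \<notin> range h" for j
  proof -
    have "\<not> int n dvd (j - k)"
    proof
      assume "int n dvd (j - k)"
      then obtain q where "j - k = int n * q" by (rule dvdE)
      then have "j = h q" by (simp add: h_def)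
      with that show False by blast
    qed
    then show ?thesis by (simp add: progression_inverse_weight_def)
  qed
  ultimately show ?thesis
    using has_sum_cong_neutral[of "range h" UNIV "progression_inverse_weight n k"] by auto
qed

lemma periodic2pi_add_nat_mult:
  assumes "periodic2pi f"
  shows "f (x + 2 * pi * real t) = f x"
proof (induction t)
  case (Suc t)
  have "f (x + 2 * pi * real (Suc t)) = f ((x + 2 * pi * real t) + 2 * pi)"
    by (simp add: algebra_simps)
  with Suc assms show ?case by (simp add: periodic2pi_def)
qed simp

lemma absolutely_integrable_in_L2_mult:
  fixes g :: "real \<Rightarrow> complex"
  assumes f: "in_L2 f" and g: "continuous_on UNIV g" "\<And>x. cmod (g x) \<le> 1"
  shows "(\<lambda>x. f x * g x) absolutely_integrable_on {0..2*pi}"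
proof (rule measurable_bounded_by_integrable_imp_absolutely_integrable)
  have "f \<in> borel_measurable lebesgue" "g \<in> borel_measurable lebesgue"
    using f continuous_imp_measurable_on_sets_lebesgue[OF g(1)] by (simp_all add: in_L2_def)
  then show "(\<lambda>x. f x * g x) \<in> borel_measurable (lebesgue_on {0..2*pi})"
    by (intro measurable_restrict_space1 borel_measurable_times)
  show "{0..2*pi} \<in> sets lebesgue" by simp
  have "(\<lambda>x. (cmod (f x))\<^sup>2) integrable_on {0..2*pi}"
    using f set_lebesgue_integral_eq_integral(1) by (auto simp: in_L2_def)
  then show "(\<lambda>x. (1 + (cmod (f x))\<^sup>2) / 2) integrable_on {0..2*pi}"
    by (intro integrable_on_divide integrable_add) auto
  fix x
  have "cmod (f x * g x) \<le> cmod (f x)"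
    using g(2)[of x] by (simp add: norm_mult mult_left_le)
  also have "\<dots> \<le> (1 + (cmod (f x))\<^sup>2) / 2"
    using sum_squares_ge_zero[of "cmod (f x) - 1" 0] by (simp add: power2_eq_square algebra_simps)
  finally show "norm (f x * g x) \<le> (1 + (cmod (f x))\<^sup>2) / 2" .
qed

lemma has_integral_stretch_quasiperiodic:
  fixes \<phi> :: "real \<Rightarrow> 'b::{banach, real_normed_algebra_1}" and n :: nat
  assumes n: "1 \<le> n" and P: "0 \<le> P"
    and shift: "\<And>y t. \<phi> (y + P * real t) = \<omega> ^ t * \<phi> y"
    and J: "(\<phi> has_integral J) {0..P}"
  shows "((\<lambda>x. \<phi> (real n * x)) has_integral (1 / real n) *\<^sub>R ((\<Sum>t<n. \<omega> ^ t) * J)) {0..P}"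
proof -
  have period: "(\<phi> has_integral \<omega> ^ t * J) {P * real t .. P * real t + P}" for t
  proof -
    have "((\<phi> \<circ> (+) (P * real t)) has_integral \<omega> ^ t * J) {0..P}"
      using has_integral_mult_right[OF J] by (simp add: o_def shift add.commute)
    then show ?thesis
      by (simp add: has_integral_shift_Icc_real add.commute)
  qed
  have "(\<phi> has_integral (\<Sum>t<N. \<omega> ^ t) * J) {0..P * real N}" for N
  proof (induction N)
    case (Suc N)
    then have "(\<phi> has_integral (\<Sum>t<N. \<omega> ^ t) * J + \<omega> ^ N * J) {0..P * real N + P}"
      using P by (intro has_integral_combine[where c="P * real N"] period) auto
    then show ?case
      by (simp add: algebra_simps)
  qed (simp add: has_integral_refl)
  then have "((\<lambda>x. \<phi> (real n *\<^sub>R x + 0)) has_integral ((\<Sum>t<n. \<omega> ^ t) * J) /\<^sub>R real n ^ DIM(real))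
      (cbox ((0 - 0) /\<^sub>R real n) ((P * real n - 0) /\<^sub>R real n))"
    using n by (intro has_integral_affinity') auto
  moreover have "inverse (real n) * (P * real n) = P"
    using n by simp
  ultimately show ?thesis
    by (simp add: divide_inverse_commute)
qed

lemma fcoeff_eq_integral:
  assumes "in_L2 f"
  shows "fcoeff f q = complex_of_real (1 / (2 * pi)) *
     integral {0..2*pi} (\<lambda>x. f x * exp (- (\<i> * of_int q * complex_of_real x)))"
proof -
  have "(\<lambda>x. f x * exp (- (\<i> * of_int q * complex_of_real x))) absolutely_integrable_on {0..2*pi}"
    by (intro absolutely_integrable_in_L2_mult assms continuous_intros) (simp add: norm_exp_eq_Re)
  then show ?thesis
    unfolding fcoeff_def by (simp add: set_lebesgue_integral_eq_integral(2))
qed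

lemma sum_powers_exp_rational:
  fixes l :: int and n :: nat
  assumes "1 \<le> n"
  shows "(\<Sum>t<n. exp (- (\<i> * complex_of_real (2 * pi * real_of_int l / real n))) ^ t)
       = (if int n dvd l then of_nat n else 0)"
proof (cases "int n dvd l")
  case True
  then obtain q where "l = int n * q" by (rule dvdE)
  then have "exp (- (\<i> * complex_of_real (2 * pi * real_of_int l / real n))) = 1"
    using assms unfolding exp_eq_1 by (auto intro!: exI[of _ "- q"])
  with True show ?thesis by simp
next
  case False
  define \<omega> where "\<omega> = exp (- (\<i> * complex_of_real (2 * pi * real_of_int l / real n)))"
  have "\<omega> \<noteq> 1"
  proof
    assume "\<omega> = 1"
    then obtain k :: int where "- (2 * pi * real_of_int l / real n) = of_int (2 * k) * pi"
      unfolding \<omega>_def exp_eq_1 by auto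
    then have "pi * (real_of_int l + real_of_int k * real n) = 0"
      using assms by (simp add: field_simps)
    then have "real_of_int l = real_of_int (- k * int n)"
      by (simp add: add_eq_0_iff)
    then have "l = - k * int n" by linarith
    with False show False by simp
  qed
  moreover have "\<omega> ^ n = 1"
  proof -
    have "\<omega> ^ n = exp (- (\<i> * complex_of_real (2 * pi * real_of_int l)))"
      using assms unfolding \<omega>_def by (simp add: exp_of_nat_mult[symmetric] field_simps)
    also have "\<dots> = 1" unfolding exp_eq_1 by (auto intro!: exI[of _ "- l"])
    finally show ?thesis .
  qed
  ultimately show ?thesis
    using False by (simp add: \<omega>_def sum_gp_strict)
qed

lemma has_integral_stretch_exp:
  fixes n :: nat and l :: int
  assumes f: "in_L2 f" and n: "1 \<le> n"
  shows "((\<lambda>x. f (real n * x) * exp (- (\<i> * of_int l * complex_of_real x))) has_integral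
           (if int n dvd l then 2 * pi * fcoeff f (l div int n) else 0)) {0..2*pi}"
proof -
  define \<theta> where "\<theta> = real_of_int l / real n"
  define \<phi> where "\<phi> y = f y * exp (- (\<i> * complex_of_real (\<theta> * y)))" for y
  define \<omega> where "\<omega> = exp (- (\<i> * complex_of_real (2 * pi * real_of_int l / real n)))"
  define J where "J = integral {0..2*pi} \<phi>"
  have "\<phi> absolutely_integrable_on {0..2*pi}"
    unfolding \<phi>_def by (intro absolutely_integrable_in_L2_mult f continuous_intros) (simp add: norm_exp_eq_Re)
  then have J: "(\<phi> has_integral J) {0..2*pi}"
    unfolding J_def by (simp add: set_lebesgue_integral_eq_integral(1) integrable_integral)
  have per: "periodic2pi f"
    using f by (simp add: in_L2_def)
  have shift: "\<phi> (y + 2 * pi * real t) = \<omega> ^ t * \<phi> y" for y t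
  proof -
    have "- (\<i> * complex_of_real (\<theta> * (y + 2 * pi * real t)))
        = - (\<i> * complex_of_real (\<theta> * y)) + of_nat t * - (\<i> * complex_of_real (2 * pi * real_of_int l / real n))"
      unfolding \<theta>_def by (simp add: algebra_simps)
    then have "exp (- (\<i> * complex_of_real (\<theta> * (y + 2 * pi * real t))))
        = exp (- (\<i> * complex_of_real (\<theta> * y))) * \<omega> ^ t"
      by (simp only: exp_add exp_of_nat_mult \<omega>_def)
    then show ?thesis
      unfolding \<phi>_def periodic2pi_add_nat_mult[OF per] by simp
  qed
  have "((\<lambda>x. \<phi> (real n * x)) has_integral (1 / real n) *\<^sub>R ((\<Sum>t<n. \<omega> ^ t) * J)) {0..2*pi}"
    using n J shift by (intro has_integral_stretch_quasiperiodic) auto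
  moreover have "\<phi> (real n * x) = f (real n * x) * exp (- (\<i> * of_int l * complex_of_real x))" for x
    using n unfolding \<phi>_def \<theta>_def by (simp add: mult.assoc)
  moreover have "(1 / real n) *\<^sub>R ((\<Sum>t<n. \<omega> ^ t) * J) = (if int n dvd l then 2 * pi * fcoeff f (l div int n) else 0)"
  proof -
    have "(1 / real n) *\<^sub>R ((\<Sum>t<n. \<omega> ^ t) * J) = (if int n dvd l then J else 0)"
      using n unfolding \<omega>_def sum_powers_exp_rational[OF n] by (simp add: scaleR_conv_of_real)
    moreover have "J = 2 * pi * fcoeff f (l div int n)" if dvd: "int n dvd l"
    proof -
      obtain q where "l = int n * q"
        using dvd by (rule dvdE)
      then have "\<theta> = real_of_int (l div int n)"
        using n unfolding \<theta>_def by simp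
      then show ?thesis
        unfolding J_def \<phi>_def fcoeff_eq_integral[OF f] by (simp add: mult.assoc)
    qed
    ultimately show ?thesis by simp
  qed
  ultimately show ?thesis by simp
qed

lemma absolutely_integrable_stretch_exp:
  fixes n :: nat and l :: int
  assumes f: "in_L2 f" and n: "1 \<le> n"
  shows "(\<lambda>x. f (real n * x) * exp (- (\<i> * of_int l * complex_of_real x))) absolutely_integrable_on {0..2*pi}"
proof -
  have per: "periodic2pi f"
    using f by (simp add: in_L2_def)
  have "f absolutely_integrable_on {0..2*pi}"
    using absolutely_integrable_in_L2_mult[OF f, of "\<lambda>_. 1"] by simp
  then have norm_f: "(\<lambda>y. cmod (f y)) integrable_on {0..2*pi}"
    using absolutely_integrable_on_def by blast
  then have "(\<lambda>x. cmod (f (real n * x))) integrable_on {0..2*pi}"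
    using periodic2pi_add_nat_mult[OF per]
    by (intro has_integral_integrable[OF has_integral_stretch_quasiperiodic[OF n, where P = "2 * pi" and \<omega> = 1]])
      (auto simp: integrable_integral)
  moreover have "norm (f (real n * x) * exp (- (\<i> * of_int l * complex_of_real x))) = cmod (f (real n * x))" for x
    by (simp add: norm_mult norm_exp_eq_Re)
  ultimately show ?thesis
    using has_integral_stretch_exp[OF f n] unfolding absolutely_integrable_on_def by auto
qed

lemma has_integral_exp_int:
  "((\<lambda>x. exp (\<i> * of_int m * complex_of_real x)) has_integral (if m = 0 then complex_of_real (2 * pi) else 0)) {0..2*pi}"
proof (cases "m = 0")
  case True
  then show ?thesis
    using has_integral_const_real[of "1::complex" 0 "2*pi"] by (simp add: scaleR_conv_of_real)
next
  case False
  define A where "A = \<i> * (of_int m :: complex)"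
  have "((\<lambda>t. exp (t *\<^sub>R A) / A) has_vector_derivative exp (x *\<^sub>R A) * A / A) (at x within {0..2*pi})" for x
    by (intro has_vector_derivative_divide exp_scaleR_has_vector_derivative_right)
  then have "((\<lambda>x. exp (x *\<^sub>R A) * A / A) has_integral (exp ((2*pi) *\<^sub>R A) / A - exp (0 *\<^sub>R A) / A)) {0..2*pi}"
    by (intro fundamental_theorem_of_calculus) auto
  moreover have "exp ((2*pi) *\<^sub>R A) = 1"
    unfolding A_def exp_eq_1 by (auto simp: scaleR_conv_of_real intro!: exI[of _ m])
  ultimately show ?thesis
    using False by (simp add: A_def scaleR_conv_of_real mult_ac)
qed

lemma norm_trig_poly_squared:
  "complex_of_real ((cmod (trig_poly K a x))\<^sup>2) =
     (\<Sum>k\<in>K. \<Sum>l\<in>K. a k * cnj (a l) * exp (\<i> * of_int (k - l) * complex_of_real x))"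
proof -
  have "complex_of_real ((cmod (trig_poly K a x))\<^sup>2)
      = (\<Sum>k\<in>K. a k * exp (\<i> * of_int k * complex_of_real x)) *
        (\<Sum>l\<in>K. cnj (a l) * exp (- (\<i> * of_int l * complex_of_real x)))"
    unfolding complex_norm_square trig_poly_def by (simp add: cnj_sum exp_cnj)
  also have "\<dots> = (\<Sum>k\<in>K. \<Sum>l\<in>K. (a k * exp (\<i> * of_int k * complex_of_real x)) *
        (cnj (a l) * exp (- (\<i> * of_int l * complex_of_real x))))"
    by (rule sum_product)
  also have "\<dots> = (\<Sum>k\<in>K. \<Sum>l\<in>K. a k * cnj (a l) * exp (\<i> * of_int (k - l) * complex_of_real x))"
  proof (intro sum.cong refl)
    fix k l :: int
    have "exp (\<i> * of_int k * complex_of_real x) * exp (- (\<i> * of_int l * complex_of_real x))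
        = exp (\<i> * of_int (k - l) * complex_of_real x)"
      by (simp add: exp_add[symmetric] algebra_simps)
    then show "(a k * exp (\<i> * of_int k * complex_of_real x)) * (cnj (a l) * exp (- (\<i> * of_int l * complex_of_real x)))
        = a k * cnj (a l) * exp (\<i> * of_int (k - l) * complex_of_real x)"
      by (metis mult.assoc mult.left_commute)
  qed
  finally show ?thesis .
qed

lemma L2norm_trig_poly:
  assumes K: "finite K"
  shows "L2norm (trig_poly K a) = sqrt (\<Sum>k\<in>K. (cmod (a k))\<^sup>2)"
proof -
  have "continuous_on {0..2*pi} (\<lambda>x. (cmod (trig_poly K a x))\<^sup>2)"
    unfolding trig_poly_def by (intro continuous_intros)
  then have integrable: "(\<lambda>x. (cmod (trig_poly K a x))\<^sup>2) absolutely_integrable_on {0..2*pi}"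
    unfolding absolutely_integrable_on_def using integrable_continuous_interval by simp
  have "((\<lambda>x. \<Sum>k\<in>K. \<Sum>l\<in>K. a k * cnj (a l) * exp (\<i> * of_int (k - l) * complex_of_real x)) has_integral
      (\<Sum>k\<in>K. \<Sum>l\<in>K. a k * cnj (a l) * (if k - l = 0 then complex_of_real (2 * pi) else 0))) {0..2*pi}"
    by (intro has_integral_sum K has_integral_mult_right has_integral_exp_int)
  also have "(\<Sum>k\<in>K. \<Sum>l\<in>K. a k * cnj (a l) * (if k - l = 0 then complex_of_real (2 * pi) else 0))
      = (\<Sum>k\<in>K. a k * cnj (a k) * complex_of_real (2 * pi))"
    using K by (intro sum.cong refl) (simp add: if_distrib cong: if_cong)
  also have "\<dots> = (\<Sum>k\<in>K. complex_of_real (2 * pi * (cmod (a k))\<^sup>2))"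
    by (simp only: complex_norm_square of_real_mult mult.commute)
  also have "\<dots> = complex_of_real (2 * pi * (\<Sum>k\<in>K. (cmod (a k))\<^sup>2))"
    by (simp only: of_real_sum sum_distrib_left)
  finally have "((\<lambda>x. complex_of_real ((cmod (trig_poly K a x))\<^sup>2)) has_integral
      complex_of_real (2 * pi * (\<Sum>k\<in>K. (cmod (a k))\<^sup>2))) {0..2*pi}"
    unfolding norm_trig_poly_squared .
  from has_integral_Re[OF this]
  have "((\<lambda>x. (cmod (trig_poly K a x))\<^sup>2) has_integral 2 * pi * (\<Sum>k\<in>K. (cmod (a k))\<^sup>2)) {0..2*pi}"
    by simp
  then have "(LINT x:{0..2*pi}|lebesgue. (cmod (trig_poly K a x))\<^sup>2) = 2 * pi * (\<Sum>k\<in>K. (cmod (a k))\<^sup>2)"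
    unfolding set_lebesgue_integral_eq_integral(2)[OF integrable] by (rule integral_unique)
  then show ?thesis
    unfolding L2norm_def by simp
qed

lemma fcoeff_dilate_mult_bessel_trig:
  fixes n :: nat
  assumes f: "in_L2 f" and n: "1 \<le> n" and K: "finite K"
  shows "fcoeff (\<lambda>x. dilate (1 / real n) f x * bessel_trig s K a x) j
    = (\<Sum>k\<in>K. complex_of_real (weight k powr (s/2)) * a k *
            (if int n dvd (j - k) then fcoeff f ((j - k) div int n) else 0))"
proof -
  define c where "c k = complex_of_real (weight k powr (s/2)) * a k" for k
  define g where "g k x = f (real n * x) * exp (- (\<i> * of_int (j - k) * complex_of_real x))" for k x
  have product: "dilate (1 / real n) f x * bessel_trig s K a x * exp (- (\<i> * of_int j * complex_of_real x))
      = (\<Sum>k\<in>K. c k * g k x)" for x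
  proof -
    have exp_diff: "exp (\<i> * of_int k * complex_of_real x) * exp (- (\<i> * of_int j * complex_of_real x))
        = exp (- (\<i> * of_int (j - k) * complex_of_real x))" for k
      by (simp add: exp_add[symmetric] algebra_simps)
    have "dilate (1 / real n) f x = f (real n * x)"
      unfolding dilate_def by (simp add: mult.commute)
    then have "dilate (1 / real n) f x * bessel_trig s K a x * exp (- (\<i> * of_int j * complex_of_real x))
      = (\<Sum>k\<in>K. c k * (f (real n * x) * (exp (\<i> * of_int k * complex_of_real x) * exp (- (\<i> * of_int j * complex_of_real x)))))"
      unfolding bessel_trig_def c_def weight_def by (simp add: sum_distrib_left sum_distrib_right mult_ac)
    also have "\<dots> = (\<Sum>k\<in>K. c k * g k x)"
      unfolding g_def exp_diff ..
    finally show ?thesis .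
  qed
  have "(\<lambda>x. \<Sum>k\<in>K. c k * g k x) absolutely_integrable_on {0..2*pi}"
    unfolding g_def by (intro absolutely_integrable_sum K set_integrable_mult_right absolutely_integrable_stretch_exp f n)
  moreover have "((\<lambda>x. \<Sum>k\<in>K. c k * g k x) has_integral
      (\<Sum>k\<in>K. c k * (if int n dvd (j - k) then 2 * pi * fcoeff f ((j - k) div int n) else 0))) {0..2*pi}"
    unfolding g_def by (intro has_integral_sum K has_integral_mult_right has_integral_stretch_exp f n)
  ultimately have "(LINT x:{0..2*pi}|lebesgue. dilate (1 / real n) f x * bessel_trig s K a x * exp (- (\<i> * of_int j * complex_of_real x)))
      = (\<Sum>k\<in>K. c k * (if int n dvd (j - k) then 2 * pi * fcoeff f ((j - k) div int n) else 0))"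
    unfolding product by (simp add: set_lebesgue_integral_eq_integral(2) integral_unique)
  then show ?thesis
    unfolding fcoeff_def by (simp add: sum_distrib_left c_def if_distrib mult_ac cong: if_cong)
qed

lemma norm_sum_squared_le_weighted:
  fixes c :: "'a \<Rightarrow> complex" and h :: "int \<Rightarrow> complex" and \<mu> :: "'a \<Rightarrow> int"
  assumes "finite A" "inj_on \<mu> A" and summable: "(\<lambda>m. weight m * (cmod (h m))\<^sup>2) summable_on UNIV"
  shows "(cmod (\<Sum>k\<in>A. c k * h (\<mu> k)))\<^sup>2
     \<le> (\<Sum>\<^sub>\<infinity>m. weight m * (cmod (h m))\<^sup>2) * (\<Sum>k\<in>A. (cmod (c k))\<^sup>2 / weight (\<mu> k))"
proof -
  have "cmod (\<Sum>k\<in>A. c k * h (\<mu> k)) \<le> (\<Sum>k\<in>A. cmod (c k) * cmod (h (\<mu> k)))"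
    using norm_sum[of "\<lambda>k. c k * h (\<mu> k)" A] by (simp add: norm_mult)
  also have "\<dots> = (\<Sum>k\<in>A. (sqrt (weight (\<mu> k)) * cmod (h (\<mu> k))) * (cmod (c k) / sqrt (weight (\<mu> k))))"
    by (intro sum.cong refl) (simp add: field_simps)
  finally have "(cmod (\<Sum>k\<in>A. c k * h (\<mu> k)))\<^sup>2
      \<le> (\<Sum>k\<in>A. (sqrt (weight (\<mu> k)) * cmod (h (\<mu> k))) * (cmod (c k) / sqrt (weight (\<mu> k))))\<^sup>2"
    by (simp add: power_mono)
  also have "\<dots> \<le> (\<Sum>k\<in>A. (sqrt (weight (\<mu> k)) * cmod (h (\<mu> k)))\<^sup>2) * (\<Sum>k\<in>A. (cmod (c k) / sqrt (weight (\<mu> k)))\<^sup>2)"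
    by (rule Cauchy_Schwarz_ineq_sum)
  also have "\<dots> = (\<Sum>m\<in>\<mu> ` A. weight m * (cmod (h m))\<^sup>2) * (\<Sum>k\<in>A. (cmod (c k))\<^sup>2 / weight (\<mu> k))"
    using assms(2) by (simp add: sum.reindex power_mult_distrib power_divide)
  also have "\<dots> \<le> (\<Sum>\<^sub>\<infinity>m. weight m * (cmod (h m))\<^sup>2) * (\<Sum>k\<in>A. (cmod (c k))\<^sup>2 / weight (\<mu> k))"
    using assms(1) by (intro mult_right_mono finite_sum_le_infsum summable sum_nonneg) auto
  finally show ?thesis .
qed

lemma norm_sum_progression_squared_le:
  fixes c h :: "int \<Rightarrow> complex"
  assumes K: "finite K" and summable: "(\<lambda>m. weight m * (cmod (h m))\<^sup>2) summable_on UNIV"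
  shows "(cmod (\<Sum>k\<in>K. c k * (if int n dvd (j - k) then h ((j - k) div int n) else 0)))\<^sup>2
     \<le> (\<Sum>\<^sub>\<infinity>m. weight m * (cmod (h m))\<^sup>2) * (\<Sum>k\<in>K. (cmod (c k))\<^sup>2 * progression_inverse_weight n k j)"
proof -
  define Kj where "Kj = {k\<in>K. int n dvd (j - k)}"
  define \<mu> where "\<mu> k = (j - k) div int n" for k
  have "k = j - int n * \<mu> k" if "k \<in> Kj" for k
    using that by (auto simp: Kj_def \<mu>_def)
  then have "inj_on \<mu> Kj"
    by (metis inj_onI)
  moreover have "(\<Sum>k\<in>K. c k * (if int n dvd (j - k) then h ((j - k) div int n) else 0))
      = (\<Sum>k\<in>Kj. c k * h (\<mu> k))"
    unfolding Kj_def \<mu>_def by (simp add: sum.inter_filter[OF K, symmetric] if_distrib cong: if_cong)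
  moreover have "(\<Sum>k\<in>Kj. (cmod (c k))\<^sup>2 / weight (\<mu> k)) = (\<Sum>k\<in>K. (cmod (c k))\<^sup>2 * progression_inverse_weight n k j)"
    unfolding Kj_def \<mu>_def progression_inverse_weight_def
    by (simp add: sum.inter_filter[OF K, symmetric] if_distrib cong: if_cong)
  ultimately show ?thesis
    using norm_sum_squared_le_weighted[of Kj \<mu> h c] K summable by (simp add: Kj_def)
qed

lemma progression_weight_ratio_le:
  fixes n :: nat
  assumes "1 \<le> n" "0 \<le> s" "s \<le> 1"
  shows "weight j powr (-s) * weight k powr s * progression_inverse_weight n k j
     \<le> 2 * real n powr (2 * s) * (2 * progression_inverse_weight n k j + 1 / weight j)"
proof (cases "int n dvd (j - k)")
  case True
  then have "k = j - int n * ((j - k) div int n)"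
    by simp
  then show ?thesis
    using True weight_ratio_le[OF assms, of j "(j - k) div int n"]
    by (simp add: progression_inverse_weight_def)
qed (simp add: progression_inverse_weight_def)

lemma product_coefficient_bound:
  fixes h a :: "int \<Rightarrow> complex" and n :: nat
  assumes K: "finite K" and n: "1 \<le> n" and s: "0 \<le> s" "s \<le> 1"
    and summable: "(\<lambda>m. weight m * (cmod (h m))\<^sup>2) summable_on UNIV"
  shows "weight j powr (-s) * (cmod (\<Sum>k\<in>K. complex_of_real (weight k powr (s/2)) * a k *
            (if int n dvd (j - k) then h ((j - k) div int n) else 0)))\<^sup>2
    \<le> 2 * real n powr (2 * s) * (\<Sum>\<^sub>\<infinity>m. weight m * (cmod (h m))\<^sup>2) *
       (\<Sum>k\<in>K. (2 * progression_inverse_weight n k j + 1 / weight j) * (cmod (a k))\<^sup>2)"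
proof -
  define F where "F = (\<Sum>\<^sub>\<infinity>m. weight m * (cmod (h m))\<^sup>2)"
  have F: "0 \<le> F"
    unfolding F_def by (intro infsum_nonneg) auto
  have "(cmod (complex_of_real (weight k powr (s/2)) * a k))\<^sup>2 = weight k powr s * (cmod (a k))\<^sup>2" for k
    by (simp add: norm_mult power_mult_distrib powr_powr flip: powr_realpow)
  then have "weight j powr (-s) * (cmod (\<Sum>k\<in>K. complex_of_real (weight k powr (s/2)) * a k *
            (if int n dvd (j - k) then h ((j - k) div int n) else 0)))\<^sup>2
      \<le> weight j powr (-s) * (F * (\<Sum>k\<in>K. weight k powr s * (cmod (a k))\<^sup>2 * progression_inverse_weight n k j))"
    using norm_sum_progression_squared_le[OF K summable, of "\<lambda>k. complex_of_real (weight k powr (s/2)) * a k"]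
    by (intro mult_left_mono) (simp_all add: F_def mult.assoc)
  also have "\<dots> = F * (\<Sum>k\<in>K. (weight j powr (-s) * weight k powr s * progression_inverse_weight n k j) * (cmod (a k))\<^sup>2)"
    by (simp add: sum_distrib_left mult_ac)
  also have "\<dots> \<le> F * (\<Sum>k\<in>K. 2 * real n powr (2 * s) * (2 * progression_inverse_weight n k j + 1 / weight j) * (cmod (a k))\<^sup>2)"
    using F by (intro mult_left_mono sum_mono mult_right_mono progression_weight_ratio_le n s) auto
  finally show ?thesis
    by (simp add: F_def sum_distrib_left mult_ac)
qed

lemma has_sum_product_coefficient_majorant:
  fixes n :: nat
  assumes K: "finite K" and n: "1 \<le> n"
  shows "((\<lambda>j. \<Sum>k\<in>K. (2 * progression_inverse_weight n k j + 1 / weight j) * (cmod (a k))\<^sup>2)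
      has_sum 3 * inverse_weight_sum * (\<Sum>k\<in>K. (cmod (a k))\<^sup>2)) UNIV"
proof -
  have "((\<lambda>j. 1 / weight j) has_sum inverse_weight_sum) UNIV"
    unfolding inverse_weight_sum_def by (rule has_sum_infsum[OF summable_on_inverse_weight])
  then have "((\<lambda>j. (2 * progression_inverse_weight n k j + 1 / weight j) * (cmod (a k))\<^sup>2)
      has_sum 3 * inverse_weight_sum * (cmod (a k))\<^sup>2) UNIV" for k
    using has_sum_add[OF has_sum_cmult_right[OF has_sum_progression_inverse_weight[OF n], of 2]]
    by (intro has_sum_cmult_left) fastforce
  then have "((\<lambda>j. \<Sum>k\<in>K. (2 * progression_inverse_weight n k j + 1 / weight j) * (cmod (a k))\<^sup>2)
      has_sum (\<Sum>k\<in>K. 3 * inverse_weight_sum * (cmod (a k))\<^sup>2)) UNIV"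
    by (rule has_sum_sum[OF K])
  then show ?thesis
    by (simp add: sum_distrib_left)
qed

lemma dilate_mult_bessel_trig_estimate:
  fixes n :: nat and a :: "int \<Rightarrow> complex"
  assumes f: "in_H1 f" and n: "1 \<le> n" and K: "finite K" and s: "0 \<le> s" "s \<le> 1"
  defines "p \<equiv> \<lambda>x. dilate (1 / real n) f x * bessel_trig s K a x"
  shows "Hs_summable (- s) p"
    and "Hs_norm (- s) p \<le> sqrt (6 * inverse_weight_sum) * real n powr s * Hs_norm 1 f * L2norm (trig_poly K a)"
proof -
  define F where "F = (\<Sum>\<^sub>\<infinity>m. weight m * (cmod (fcoeff f m))\<^sup>2)"
  define A where "A = (\<Sum>k\<in>K. (cmod (a k))\<^sup>2)"
  have weight_eq: "(1 + (real_of_int k)\<^sup>2) powr r = weight k powr r" for k and r :: real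
    by (simp add: weight_def)
  have f_summable: "(\<lambda>m. weight m * (cmod (fcoeff f m))\<^sup>2) summable_on UNIV"
    using f by (simp add: in_H1_def Hs_summable_def weight_def)
  have Hs_norm_f: "Hs_norm 1 f = sqrt F"
    unfolding Hs_norm_def F_def weight_eq by simp
  have L2norm_a: "L2norm (trig_poly K a) = sqrt A"
    unfolding A_def by (rule L2norm_trig_poly[OF K])
  have "weight j powr (-s) * (cmod (fcoeff p j))\<^sup>2 \<le> 2 * real n powr (2 * s) * F *
      (\<Sum>k\<in>K. (2 * progression_inverse_weight n k j + 1 / weight j) * (cmod (a k))\<^sup>2)" for j
    unfolding p_def F_def fcoeff_dilate_mult_bessel_trig[OF f[unfolded in_H1_def, THEN conjunct1] n K]
    by (rule product_coefficient_bound[OF K n s f_summable])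
  note dominated = has_sum_dominated[OF has_sum_cmult_right[OF has_sum_product_coefficient_majorant[OF K n, of a]],
      of "\<lambda>j. weight j powr (-s) * (cmod (fcoeff p j))\<^sup>2" "2 * real n powr (2 * s) * F", OF _ this]
  then show "Hs_summable (- s) p"
    by (simp add: Hs_summable_def weight_eq)
  have "Hs_norm (- s) p \<le> sqrt (2 * real n powr (2 * s) * F * (3 * inverse_weight_sum * A))"
    using dominated(2) by (simp add: Hs_norm_def weight_eq A_def)
  also have "\<dots> = sqrt (6 * inverse_weight_sum) * real n powr s * sqrt F * sqrt A"
  proof -
    have "real n powr (2 * s) = (real n powr s)\<^sup>2"
      by (simp add: power2_eq_square flip: powr_add)
    then show ?thesis
      by (simp add: real_sqrt_mult mult_ac)
  qed
  finally show "Hs_norm (- s) p \<le> sqrt (6 * inverse_weight_sum) * real n powr s * Hs_norm 1 f * L2norm (trig_poly K a)"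
    by (simp add: Hs_norm_f L2norm_a)
qed

theorem lemma4p8:
  shows "\<forall>s\<in>{0..1::real}. \<exists>C::real. \<forall>f \<epsilon> (K::int set) (a::int \<Rightarrow> complex).
     in_H1 f \<longrightarrow> 0 < \<epsilon> \<longrightarrow> \<epsilon> < 1 \<longrightarrow> 1 / \<epsilon> \<in> \<nat> \<longrightarrow> finite K \<longrightarrow>
     (let p = (\<lambda>x. dilate \<epsilon> f x * bessel_trig s K a x) in
        Hs_summable (- s) p \<and>
        Hs_norm (- s) p \<le> C * \<epsilon> powr (- s) * Hs_norm 1 f * L2norm (trig_poly K a))"
proof (intro ballI exI allI impI)
  fix s \<epsilon> :: real and f and K :: "int set" and a :: "int \<Rightarrow> complex"
  assume "s \<in> {0..1}" "in_H1 f" "0 < \<epsilon>" "\<epsilon> < 1" "1 / \<epsilon> \<in> \<nat>" "finite K"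
  then obtain n where n: "1 / \<epsilon> = real n" and s: "0 \<le> s" "s \<le> 1"
    by (auto elim: Nats_cases)
  have "1 < 1 / \<epsilon>"
    using \<open>0 < \<epsilon>\<close> \<open>\<epsilon> < 1\<close> by simp
  then have "1 \<le> n"
    unfolding n by simp
  have "\<epsilon> = 1 / (1 / \<epsilon>)"
    by simp
  then have "\<epsilon> = 1 / real n" "\<epsilon> powr (- s) = real n powr s"
    unfolding n using \<open>1 \<le> n\<close> by (simp_all add: powr_minus_divide powr_divide)
  with \<open>1 \<le> n\<close> show "let p = (\<lambda>x. dilate \<epsilon> f x * bessel_trig s K a x) in
        Hs_summable (- s) p \<and>
        Hs_norm (- s) p \<le> sqrt (6 * inverse_weight_sum) * \<epsilon> powr (- s) * Hs_norm 1 f * L2norm (trig_poly K a)"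
    using dilate_mult_bessel_trig_estimate[OF \<open>in_H1 f\<close> _ \<open>finite K\<close> s] by simp
qed

end
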